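(* Let $d\geq 2$ and let $\epsilon$ be a real number with $\frac{1}{d}-1<\epsilon<0$. Let $\mathcal{H}_1,\mathcal{H}_2,\mathcal{H}_3,\mathcal{H}_4$ each be $\mathbb{C}^d$, with Alice holding $\mathcal{H}_A=\mathcal{H}_1\otimes\mathcal{H}_3$ and Bob holding $\mathcal{H}_B=\mathcal{H}_2\otimes\mathcal{H}_4$. Consider the (Watrous) operator $$\rho_\epsilon=\mathbb{1}_{12}\otimes\mathbb{1}_{34}+\frac{\epsilon d-1}{d}\left(\mathbb{1}_{12}\otimes F_{34}+F_{12}\otimes\mathbb{1}_{34}\right)+F_{12}\otimes F_{34}.$$ Then the state $\rho_\epsilon/\mathrm{Tr}\,\rho_\epsilon$ is distillable.
   Context: $F_{ij}$ denotes the swap (flip) operator $\sum_{k,l}|kl\rangle\langle lk|$ exchanging the factors $\mathcal{H}_i$ and $\mathcal{H}_j$, and $\mathbb{1}_{ij}$ the identity on $\mathcal{H}_i\otimes\mathcal{H}_j$. For $\rho$ a state on $\mathcal{H}_A\otimes\mathcal{H}_B$, $\rho^{T_B}$ denotes the partial transpose with respect to Bob's system (in the computational basis). A state $\rho$ on $\mathcal{H}_A\otimes\mathcal{H}_B$ is called distillable if there exist an integer $n\geq 1$ and a vector $|\psi\rangle\in\mathcal{H}_A^{\otimes n}\otimes\mathcal{H}_B^{\otimes n}$ of Schmidt rank at most $2$ with respect to the split $\mathcal{H}_A^{\otimes n}\,|\,\mathcal{H}_B^{\otimes n}$ such that $\langle\psi|(\rho^{\otimes n})^{T_B}|\psi\rangle<0$,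 where the partial transpose is taken over all of Bob's factors. *)

theory Defs
  imports Complex_Main
begin

text \<open>Operators on a bipartite space H_A (x) H_B are represented by their matrices in the
computational basis: functions from pairs of basis labels to complex numbers.\<close>

type_synonym ('a, 'b) bop = "('a \<times> 'b) \<Rightarrow> ('a \<times> 'b) \<Rightarrow> complex"

definition op_trace :: "'a set \<Rightarrow> 'b set \<Rightarrow> ('a, 'b) bop \<Rightarrow> complex" where
  "op_trace SA SB \<rho> = (\<Sum>u\<in>SA \<times> SB. \<rho> u u)"

text \<open>Basis labels of the n-fold tensor power of a space with basis labels S.\<close>
definition tlabels :: "'a set \<Rightarrow> nat \<Rightarrow> 'a list set" where
  "tlabels S n = {xs. length xs = n \<and> set xs \<subseteq> S}"

text \<open>rho^{(x)n}, viewed as an operator on H_A^{(x)n} (x) H_B^{(x)n}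
(factors reordered so that all of Alice's factors come first).\<close>
definition tpow :: "nat \<Rightarrow> ('a, 'b) bop \<Rightarrow> ('a list, 'b list) bop" where
  "tpow n \<rho> = (\<lambda>(xs, ys) (xs', ys'). \<Prod>k<n. \<rho> (xs ! k, ys ! k) (xs' ! k, ys' ! k))"

definition ptrans_B :: "('a, 'b) bop \<Rightarrow> ('a, 'b) bop" where
  "ptrans_B M = (\<lambda>(x, y) (x', y'). M (x, y') (x', y))"

definition schmidt_rank_le :: "nat \<Rightarrow> 'a set \<Rightarrow> 'b set \<Rightarrow> ('a \<times> 'b \<Rightarrow> complex) \<Rightarrow> bool" where
  "schmidt_rank_le k XA XB \<psi> \<longleftrightarrow>
     (\<exists>(a :: nat \<Rightarrow> 'a \<Rightarrow> complex) (b :: nat \<Rightarrow> 'b \<Rightarrow> complex).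
        \<forall>x\<in>XA. \<forall>y\<in>XB. \<psi> (x, y) = (\<Sum>i<k. a i x * b i y))"

definition qform :: "'a set \<Rightarrow> 'b set \<Rightarrow> ('a, 'b) bop \<Rightarrow> ('a \<times> 'b \<Rightarrow> complex) \<Rightarrow> complex" where
  "qform XA XB M \<psi> = (\<Sum>u\<in>XA \<times> XB. \<Sum>v\<in>XA \<times> XB. cnj (\<psi> u) * M u v * \<psi> v)"

definition distillable :: "'a set \<Rightarrow> 'b set \<Rightarrow> ('a, 'b) bop \<Rightarrow> bool" where
  "distillable SA SB \<rho> \<longleftrightarrow>
     (\<exists>n\<ge>1. \<exists>\<psi>. schmidt_rank_le 2 (tlabels SA n) (tlabels SB n) \<psi> \<and>
        (let q = qform (tlabels SA n) (tlabels SB n) (ptrans_B (tpow n \<rho>)) \<psi>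
         in Im q = 0 \<and> Re q < 0))"

definition kd :: "nat \<Rightarrow> nat \<Rightarrow> complex" where
  "kd i j = (if i = j then 1 else 0)"

text \<open>Watrous operator on H1 (x) H2 (x) H3 (x) H4, each C^d; Alice holds H1 (x) H3
with labels (i1,i3), Bob holds H2 (x) H4 with labels (i2,i4).
Matrix entries: 1_12 = kd i1 j1 * kd i2 j2, F_12 = kd i1 j2 * kd i2 j1, similarly for 34.\<close>
definition watrous :: "nat \<Rightarrow> real \<Rightarrow> (nat \<times> nat, nat \<times> nat) bop" where
  "watrous d \<epsilon> = (\<lambda>((i1, i3), (i2, i4)) ((j1, j3), (j2, j4)).
     let I12 = kd i1 j1 * kd i2 j2; F12 = kd i1 j2 * kd i2 j1;
         I34 = kd i3 j3 * kd i4 j4; F34 = kd i3 j4 * kd i4 j3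
     in I12 * I34 + complex_of_real ((\<epsilon> * d - 1) / d) * (I12 * F34 + F12 * I34) + F12 * F34)"

end

theory Submission
  imports Defs
begin

(* On n + 1 copies take psi = sum_{j<2} a_j (x) b_j. Alice's a_j is |0> on H_3 of the first copy,
   tensored with unnormalised maximally entangled pairs linking H_1 of each copy to H_3 of the next,
   and with |j> on H_1 of the last copy; Bob's b_j is the same chain on H_4, H_2, starting in |1>.
   Peeling off one copy at a time turns <psi|(rho^(x)(n+1))^T_B|psi> into iterates of a transfer
   map on operators on C^d (x) C^d. With c = (epsilon d - 1)/d, this map sends every operator into
   span {1, Phi}, Phi the unnormalised projector onto sum_p |pp>, and 1 + Phi, 1 - Phi are
   eigenvectors with eigenvalues X = d (d + 1) (1 + c) and Y = d (d - 1) (1 - c). The expectation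
   value comes out as (3 (1 + c) X^n - (1 - c) Y^n) / (Tr rho)^(n + 1), and epsilon < 0 is exactly
   Y > X, so it is negative for large n. *)

lemma kd_mult: "kd i j * x = (if i = j then x else 0)"
  by (simp add: kd_def)

lemma kd_same [simp]: "kd i i = 1"
  by (simp add: kd_def)

lemma kd_commute: "kd i j = kd j i"
  by (simp add: kd_def)

lemma cnj_kd [simp]: "cnj (kd i j) = kd i j"
  by (simp add: kd_def)

lemma sum_if_const: "(\<Sum>x\<in>A. if P then f x else 0) = (if P then (\<Sum>x\<in>A. f x) else 0)"
  by simp

lemma sum_kd_snd:
  assumes "finite A" and "m \<in> A"
  shows "(\<Sum>x\<in>B \<times> A. kd (snd x) m * f x) = (\<Sum>p\<in>B. f (p, m))"
  using assms by (simp add: sum.cartesian_product' kd_commute[of _ m] kd_mult)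

lemma sum_nested_factor_out:
  fixes f :: "_ \<Rightarrow> _ \<Rightarrow> _ \<Rightarrow> _ \<Rightarrow> 'z::comm_semiring_1"
  shows "(\<Sum>x\<in>A. \<Sum>xs\<in>A'. \<Sum>y\<in>B. \<Sum>ys\<in>B'. \<Sum>x'\<in>C. \<Sum>xs'\<in>C'. \<Sum>y'\<in>D. \<Sum>ys'\<in>D'.
            f x y x' y' * g x y x' y' xs ys xs' ys')
       = (\<Sum>x\<in>A. \<Sum>y\<in>B. \<Sum>x'\<in>C. \<Sum>y'\<in>D.
            f x y x' y' * (\<Sum>xs\<in>A'. \<Sum>ys\<in>B'. \<Sum>xs'\<in>C'. \<Sum>ys'\<in>D'. g x y x' y' xs ys xs' ys'))"
    (is "?lhs = _")
proof -
  have "?lhs = (\<Sum>x\<in>A. \<Sum>y\<in>B. \<Sum>x'\<in>C. \<Sum>y'\<in>D. \<Sum>xs\<in>A'. \<Sum>ys\<in>B'. \<Sum>xs'\<in>C'. \<Sum>ys'\<in>D'.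
            f x y x' y' * g x y x' y' xs ys xs' ys')"
    by (simp add: sum.swap[of _ C']) (simp add: sum.swap[of _ B'], simp add: sum.swap[of _ A'])
  then show ?thesis
    by (simp only: sum_distrib_left)
qed

lemma tlabels_0 [simp]: "tlabels S 0 = {[]}"
  by (auto simp: tlabels_def)

lemma tlabels_Suc: "tlabels S (Suc n) = (\<lambda>(x, xs). x # xs) ` (S \<times> tlabels S n)"
  by (auto simp: tlabels_def image_iff length_Suc_conv)

lemma sum_tlabels_Suc:
  "(\<Sum>xs\<in>tlabels S (Suc n). f xs) = (\<Sum>x\<in>S. \<Sum>xs\<in>tlabels S n. f (x # xs))"
proof -
  have "inj_on (\<lambda>(x, xs). x # xs) (S \<times> tlabels S n)"
    by (auto simp: inj_on_def)
  then show ?thesis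
    by (simp add: tlabels_Suc sum.reindex sum.cartesian_product case_prod_unfold)
qed

(* Amplitudes of the chain vector a_j started in |m> instead of |0>: one label (i1, i3) per copy;
   i3 must equal the incoming link and i1 is passed on to the next copy. *)
fun bell_chain :: "nat \<Rightarrow> nat \<Rightarrow> (nat \<times> nat) list \<Rightarrow> complex" where
  "bell_chain j m [] = kd m j"
| "bell_chain j m (x # xs) = kd (snd x) m * bell_chain j (fst x) xs"

definition chain_state :: "nat \<Rightarrow> nat \<Rightarrow> (nat \<times> nat) list \<Rightarrow> (nat \<times> nat) list \<Rightarrow> complex" where
  "chain_state m \<mu> xs ys = (\<Sum>j<2. bell_chain j m xs * bell_chain j \<mu> ys)"

lemma chain_state_Cons:
  "chain_state m \<mu> (x # xs) (y # ys) = kd (snd x) m * kd (snd y) \<mu> * chain_state (fst x) (fst y) xs ys"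
  by (simp add: chain_state_def sum_distrib_left mult_ac)

lemma cnj_bell_chain [simp]: "cnj (bell_chain j m xs) = bell_chain j m xs"
  by (induction xs arbitrary: m) simp_all

lemma cnj_chain_state [simp]: "cnj (chain_state m \<mu> xs ys) = chain_state m \<mu> xs ys"
  by (simp add: chain_state_def)

lemma schmidt_rank_chain_state: "schmidt_rank_le 2 XA XB (\<lambda>(xs, ys). chain_state m \<mu> xs ys)"
  unfolding schmidt_rank_le_def chain_state_def
  by (intro exI[of _ "\<lambda>j. bell_chain j m"] exI[of _ "\<lambda>j. bell_chain j \<mu>"]) simp

(* The matrix element <psi_(m,mu)| (rho^(x)n)^T_B |psi_(m',mu')> between the real vectors
   psi_(m,mu) = chain_state m mu. *)
definition chain_compression :: "nat set \<Rightarrow> (nat \<times> nat, nat \<times> nat) bop \<Rightarrow> nat \<Rightarrow> (nat, nat) bop" where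
  "chain_compression A \<rho> n = (\<lambda>(m, \<mu>) (m', \<mu>').
     \<Sum>xs\<in>tlabels (A \<times> A) n. \<Sum>ys\<in>tlabels (A \<times> A) n. \<Sum>xs'\<in>tlabels (A \<times> A) n. \<Sum>ys'\<in>tlabels (A \<times> A) n.
       chain_state m \<mu> xs ys * chain_state m' \<mu>' xs' ys' * (\<Prod>k<n. \<rho> (xs ! k, ys' ! k) (xs' ! k, ys ! k)))"

lemma qform_chain_state:
  "qform (tlabels (A \<times> A) n) (tlabels (A \<times> A) n) (ptrans_B (tpow n \<rho>)) (\<lambda>(xs, ys). chain_state m \<mu> xs ys)
     = chain_compression A \<rho> n (m, \<mu>) (m, \<mu>)"
  by (simp add: qform_def ptrans_B_def tpow_def chain_compression_def sum.cartesian_product' mult_ac)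

lemma chain_compression_scale:
  "chain_compression A (\<lambda>u v. \<rho> u v / t) n u v = chain_compression A \<rho> n u v / t ^ n"
  by (simp add: chain_compression_def case_prod_unfold prod_dividef sum_divide_distrib)

lemma chain_compression_0:
  "chain_compression A \<rho> 0 u v = of_bool (u \<in> {(0, 0), (1, 1)}) * of_bool (v \<in> {(0, 0), (1, 1)})"
  by (auto simp: chain_compression_def chain_state_def kd_def numeral_2_eq_2 split: prod.split)

definition chain_transfer :: "nat set \<Rightarrow> (nat \<times> nat, nat \<times> nat) bop \<Rightarrow> (nat, nat) bop \<Rightarrow> (nat, nat) bop" where
  "chain_transfer A \<rho> H = (\<lambda>(m, \<mu>) (m', \<mu>').
     \<Sum>p\<in>A. \<Sum>r\<in>A. \<Sum>p'\<in>A. \<Sum>r'\<in>A. \<rho> ((p, m), (r', \<mu>')) ((p', m'), (r, \<mu>)) * H (p, r) (p', r'))"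

lemma chain_transfer_cong:
  assumes "\<And>u v. u \<in> A \<times> A \<Longrightarrow> v \<in> A \<times> A \<Longrightarrow> H u v = K u v"
  shows "chain_transfer A \<rho> H = chain_transfer A \<rho> K"
  unfolding chain_transfer_def using assms by (intro ext) (auto intro!: sum.cong)

lemma chain_transfer_linear:
  "chain_transfer A \<rho> (\<lambda>u v. a * H u v + b * K u v)
     = (\<lambda>u v. a * chain_transfer A \<rho> H u v + b * chain_transfer A \<rho> K u v)"
  by (intro ext) (simp add: chain_transfer_def case_prod_unfold sum.distrib sum_distrib_left algebra_simps)

lemma chain_compression_Suc:
  assumes "finite A" and "m \<in> A" "\<mu> \<in> A" "m' \<in> A" "\<mu>' \<in> A"
  shows "chain_compression A \<rho> (Suc n) (m, \<mu>) (m', \<mu>')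
           = chain_transfer A \<rho> (chain_compression A \<rho> n) (m, \<mu>) (m', \<mu>')"
proof -
  let ?S = "A \<times> A" and ?C = "chain_compression A \<rho> n"
  have peel: "chain_state m \<mu> (x # xs) (y # ys) * chain_state m' \<mu>' (x' # xs') (y' # ys')
        * (\<Prod>k<Suc n. \<rho> ((x # xs) ! k, (y' # ys') ! k) ((x' # xs') ! k, (y # ys) ! k))
      = (kd (snd x) m * kd (snd y) \<mu> * kd (snd x') m' * kd (snd y') \<mu>' * \<rho> (x, y') (x', y))
        * (chain_state (fst x) (fst y) xs ys * chain_state (fst x') (fst y') xs' ys'
           * (\<Prod>k<n. \<rho> (xs ! k, ys' ! k) (xs' ! k, ys ! k)))"
    for x y x' y' xs ys xs' ys'
    by (simp add: chain_state_Cons prod.lessThan_Suc_shift mult_ac del: prod.lessThan_Suc)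
  have "chain_compression A \<rho> (Suc n) (m, \<mu>) (m', \<mu>') = (\<Sum>x\<in>?S. \<Sum>y\<in>?S. \<Sum>x'\<in>?S. \<Sum>y'\<in>?S.
      (kd (snd x) m * kd (snd y) \<mu> * kd (snd x') m' * kd (snd y') \<mu>' * \<rho> (x, y') (x', y))
      * ?C (fst x, fst y) (fst x', fst y'))"
    unfolding chain_compression_def
    by (simp only: case_prod_conv sum_tlabels_Suc peel sum_nested_factor_out)
  also have "\<dots> = (\<Sum>x\<in>?S. kd (snd x) m * (\<Sum>y\<in>?S. kd (snd y) \<mu> * (\<Sum>x'\<in>?S. kd (snd x') m'
      * (\<Sum>y'\<in>?S. kd (snd y') \<mu>' * (\<rho> (x, y') (x', y) * ?C (fst x, fst y) (fst x', fst y'))))))"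
    by (simp add: sum_distrib_left mult_ac)
  also have "\<dots> = chain_transfer A \<rho> ?C (m, \<mu>) (m', \<mu>')"
    by (simp add: sum_kd_snd assms chain_transfer_def)
  finally show ?thesis .
qed

definition id_op :: "(nat, nat) bop" where
  "id_op = (\<lambda>(m, \<mu>) (m', \<mu>'). kd m m' * kd \<mu> \<mu>')"

(* Unnormalised projector onto sum_p |p p>, i.e. the partial transpose of the flip. *)
definition phi_op :: "(nat, nat) bop" where
  "phi_op = (\<lambda>(m, \<mu>) (m', \<mu>'). kd m \<mu> * kd m' \<mu>')"

definition phi_expect :: "nat set \<Rightarrow> (nat, nat) bop \<Rightarrow> complex" where
  "phi_expect A H = (\<Sum>p\<in>A. \<Sum>q\<in>A. H (p, p) (q, q))"

lemma op_trace_contraction: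
  assumes "finite A"
  shows "(\<Sum>p\<in>A. \<Sum>r\<in>A. \<Sum>p'\<in>A. \<Sum>r'\<in>A. kd p p' * kd r r' * H (p, r) (p', r')) = op_trace A A H"
  unfolding op_trace_def sum.cartesian_product' mult.assoc using assms by (simp add: kd_mult sum_if_const)

lemma phi_expect_contraction:
  assumes "finite A"
  shows "(\<Sum>p\<in>A. \<Sum>r\<in>A. \<Sum>p'\<in>A. \<Sum>r'\<in>A. kd p r * kd p' r' * H (p, r) (p', r')) = phi_expect A H"
  unfolding phi_expect_def mult.assoc using assms by (simp add: kd_mult sum_if_const)

lemma op_trace_id_op: "finite A \<Longrightarrow> op_trace A A id_op = of_nat (card A) ^ 2"
  by (simp add: op_trace_def id_op_def sum.cartesian_product' power2_eq_square)

lemma op_trace_phi_op: "finite A \<Longrightarrow> op_trace A A phi_op = of_nat (card A)"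
  by (simp add: op_trace_def phi_op_def sum.cartesian_product' kd_mult)

lemma phi_expect_id_op: "finite A \<Longrightarrow> phi_expect A id_op = of_nat (card A)"
  by (simp add: phi_expect_def id_op_def kd_mult)

lemma phi_expect_phi_op: "finite A \<Longrightarrow> phi_expect A phi_op = of_nat (card A) ^ 2"
  by (simp add: phi_expect_def phi_op_def power2_eq_square)

definition watrous_coeff :: "nat \<Rightarrow> real \<Rightarrow> real" where
  "watrous_coeff d \<epsilon> = (\<epsilon> * real d - 1) / real d"

lemma watrous_factor:
  fixes d :: nat and \<epsilon> :: real
  defines "c \<equiv> complex_of_real (watrous_coeff d \<epsilon>)"
  shows "watrous d \<epsilon> ((p, m), (r', \<mu>')) ((p', m'), (r, \<mu>))
     = kd p p' * kd r r' * (id_op (m, \<mu>) (m', \<mu>') + c * phi_op (m, \<mu>) (m', \<mu>'))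
     + kd p r * kd p' r' * (c * id_op (m, \<mu>) (m', \<mu>') + phi_op (m, \<mu>) (m', \<mu>'))"
  unfolding watrous_def Let_def c_def watrous_coeff_def[symmetric]
  by (simp add: id_op_def phi_op_def kd_commute[of r' r] kd_commute[of \<mu>' \<mu>]
      kd_commute[of \<mu>' m'] kd_commute[of r' p'] algebra_simps)

lemma chain_transfer_watrous:
  fixes d :: nat and \<epsilon> :: real
  assumes "finite A"
  defines "c \<equiv> complex_of_real (watrous_coeff d \<epsilon>)"
  shows "chain_transfer A (watrous d \<epsilon>) H = (\<lambda>u v.
           (op_trace A A H + c * phi_expect A H) * id_op u v + (c * op_trace A A H + phi_expect A H) * phi_op u v)"
proof (intro ext, clarify)
  fix m \<mu> m' \<mu>'
  let ?a = "id_op (m, \<mu>) (m', \<mu>') + c * phi_op (m, \<mu>) (m', \<mu>')"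
  let ?b = "c * id_op (m, \<mu>) (m', \<mu>') + phi_op (m, \<mu>) (m', \<mu>')"
  have summand: "watrous d \<epsilon> ((p, m), (r', \<mu>')) ((p', m'), (r, \<mu>)) * H (p, r) (p', r')
      = ?a * (kd p p' * kd r r' * H (p, r) (p', r')) + ?b * (kd p r * kd p' r' * H (p, r) (p', r'))"
    for p r p' r'
    unfolding watrous_factor[where d = d and \<epsilon> = \<epsilon>, folded c_def] by (simp add: algebra_simps)
  have "chain_transfer A (watrous d \<epsilon>) H (m, \<mu>) (m', \<mu>')
      = (\<Sum>p\<in>A. \<Sum>r\<in>A. \<Sum>p'\<in>A. \<Sum>r'\<in>A. ?a * (kd p p' * kd r r' * H (p, r) (p', r'))
                                         + ?b * (kd p r * kd p' r' * H (p, r) (p', r')))"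
    by (simp only: chain_transfer_def case_prod_conv summand)
  also have "\<dots> = ?a * op_trace A A H + ?b * phi_expect A H"
    unfolding op_trace_contraction[OF assms(1), symmetric] phi_expect_contraction[OF assms(1), symmetric]
    by (simp only: sum_distrib_left sum.distrib)
  finally show "chain_transfer A (watrous d \<epsilon>) H (m, \<mu>) (m', \<mu>')
      = (op_trace A A H + c * phi_expect A H) * id_op (m, \<mu>) (m', \<mu>')
        + (c * op_trace A A H + phi_expect A H) * phi_op (m, \<mu>) (m', \<mu>')"
    by (simp add: algebra_simps)
qed

lemma chain_transfer_watrous_sym:
  fixes d :: nat and \<epsilon> :: real
  defines "c \<equiv> complex_of_real (watrous_coeff d \<epsilon>)"
  shows "chain_transfer {..<d} (watrous d \<epsilon>) (\<lambda>u v. id_op u v + phi_op u v)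
           = (\<lambda>u v. of_nat d * (of_nat d + 1) * (1 + c) * (id_op u v + phi_op u v))"
proof -
  have tr: "op_trace {..<d} {..<d} (\<lambda>u v. id_op u v + phi_op u v) = of_nat d ^ 2 + of_nat d"
    and ph: "phi_expect {..<d} (\<lambda>u v. id_op u v + phi_op u v) = of_nat d + of_nat d ^ 2"
    using op_trace_id_op op_trace_phi_op phi_expect_id_op phi_expect_phi_op
    by (simp_all add: op_trace_def phi_expect_def sum.distrib)
  show ?thesis
    unfolding c_def chain_transfer_watrous[OF finite_lessThan] tr ph
    by (simp add: algebra_simps power2_eq_square)
qed

lemma chain_transfer_watrous_antisym:
  fixes d :: nat and \<epsilon> :: real
  defines "c \<equiv> complex_of_real (watrous_coeff d \<epsilon>)"
  shows "chain_transfer {..<d} (watrous d \<epsilon>) (\<lambda>u v. id_op u v - phi_op u v)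
           = (\<lambda>u v. of_nat d * (of_nat d - 1) * (1 - c) * (id_op u v - phi_op u v))"
proof -
  have tr: "op_trace {..<d} {..<d} (\<lambda>u v. id_op u v - phi_op u v) = of_nat d ^ 2 - of_nat d"
    and ph: "phi_expect {..<d} (\<lambda>u v. id_op u v - phi_op u v) = of_nat d - of_nat d ^ 2"
    using op_trace_id_op op_trace_phi_op phi_expect_id_op phi_expect_phi_op
    by (simp_all add: op_trace_def phi_expect_def sum_subtractf)
  show ?thesis
    unfolding c_def chain_transfer_watrous[OF finite_lessThan] tr ph
    by (simp add: algebra_simps power2_eq_square)
qed

lemma op_trace_chain_compression_0:
  assumes "2 \<le> d"
  shows "op_trace {..<d} {..<d} (chain_compression A \<rho> 0) = 2"
proof -
  have "{..<d} \<times> {..<d} \<inter> {u. u \<in> {(0, 0), (1, 1)}} = {(0, 0), (1, 1)}"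
    using assms by auto
  then show ?thesis
    by (simp add: op_trace_def chain_compression_0 flip: of_bool_conj)
qed

lemma phi_expect_chain_compression_0:
  assumes "2 \<le> d"
  shows "phi_expect {..<d} (chain_compression A \<rho> 0) = 4"
proof -
  have "{..<d} \<inter> {p. (p, p) \<in> {(0, 0), (1, 1)}} = {0, 1}"
    using assms by auto
  then show ?thesis
    unfolding phi_expect_def chain_compression_0 sum_product[symmetric] by simp
qed

lemma chain_compression_watrous:
  fixes d :: nat and \<epsilon> :: real
  assumes "2 \<le> d" and "u \<in> {..<d} \<times> {..<d}" and "v \<in> {..<d} \<times> {..<d}"
  defines "c \<equiv> complex_of_real (watrous_coeff d \<epsilon>)"
  shows "chain_compression {..<d} (watrous d \<epsilon>) (Suc n) u v
           = 3 * (1 + c) * (of_nat d * (of_nat d + 1) * (1 + c)) ^ n * (id_op u v + phi_op u v)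
           + (c - 1) * (of_nat d * (of_nat d - 1) * (1 - c)) ^ n * (id_op u v - phi_op u v)"
  using assms(2,3)
proof (induction n arbitrary: u v)
  case 0
  then show ?case
    by (auto simp: chain_compression_Suc chain_transfer_watrous
        op_trace_chain_compression_0[OF assms(1)] phi_expect_chain_compression_0[OF assms(1)]
        c_def algebra_simps)
next
  case (Suc n)
  let ?W = "watrous d \<epsilon>"
  have "chain_compression {..<d} ?W (Suc (Suc n)) u v
      = chain_transfer {..<d} ?W (chain_compression {..<d} ?W (Suc n)) u v"
    using Suc.prems by (auto simp: chain_compression_Suc)
  also have "\<dots> = chain_transfer {..<d} ?W (\<lambda>u v.
        3 * (1 + c) * (of_nat d * (of_nat d + 1) * (1 + c)) ^ n * (id_op u v + phi_op u v)
      + (c - 1) * (of_nat d * (of_nat d - 1) * (1 - c)) ^ n * (id_op u v - phi_op u v)) u v"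
    using Suc.IH by (simp cong: chain_transfer_cong)
  also have "\<dots> = 3 * (1 + c) * (of_nat d * (of_nat d + 1) * (1 + c)) ^ Suc n * (id_op u v + phi_op u v)
      + (c - 1) * (of_nat d * (of_nat d - 1) * (1 - c)) ^ Suc n * (id_op u v - phi_op u v)"
    unfolding chain_transfer_linear chain_transfer_watrous_sym chain_transfer_watrous_antisym c_def
    by (simp add: mult_ac)
  finally show ?case .
qed

lemma op_trace_watrous:
  fixes d :: nat and \<epsilon> :: real
  defines "c \<equiv> complex_of_real (watrous_coeff d \<epsilon>)"
  shows "op_trace ({..<d} \<times> {..<d}) ({..<d} \<times> {..<d}) (watrous d \<epsilon>)
           = of_nat d ^ 4 + 2 * c * of_nat d ^ 3 + of_nat d ^ 2"
  unfolding op_trace_def sum.cartesian_product' c_def watrous_factor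
  by (simp add: id_op_def phi_op_def kd_mult sum.distrib sum_distrib_left[symmetric]
      algebra_simps eval_nat_numeral)

lemma qform_watrous_chain_state:
  fixes d :: nat and \<epsilon> :: real
  assumes "2 \<le> d"
  defines "S \<equiv> {..<d} \<times> {..<d}" and "c \<equiv> watrous_coeff d \<epsilon>"
  shows "qform (tlabels S (Suc n)) (tlabels S (Suc n))
           (ptrans_B (tpow (Suc n) (\<lambda>u v. watrous d \<epsilon> u v / op_trace S S (watrous d \<epsilon>))))
           (\<lambda>(xs, ys). chain_state 0 1 xs ys)
         = complex_of_real ((3 * (1 + c) * (real d * (real d + 1) * (1 + c)) ^ n
                             - (1 - c) * (real d * (real d - 1) * (1 - c)) ^ n)
                            / (real d ^ 4 + 2 * c * real d ^ 3 + real d ^ 2) ^ Suc n)"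
proof -
  have mem: "(0, 1) \<in> {..<d} \<times> {..<d}"
    using assms(1) by simp
  have "chain_compression {..<d} (watrous d \<epsilon>) (Suc n) (0, 1) (0, 1)
      = complex_of_real (3 * (1 + c) * (real d * (real d + 1) * (1 + c)) ^ n
                         - (1 - c) * (real d * (real d - 1) * (1 - c)) ^ n)"
    unfolding chain_compression_watrous[OF assms(1) mem mem]
    by (simp add: c_def id_op_def phi_op_def kd_def algebra_simps)
  then show ?thesis
    by (simp add: S_def qform_chain_state chain_compression_scale op_trace_watrous c_def)
qed

lemma watrous_coeff_bounds:
  assumes "2 \<le> d" and "1 / real d - 1 < \<epsilon>" and "\<epsilon> < 0"
  shows "-1 < watrous_coeff d \<epsilon>" and "watrous_coeff d \<epsilon> < 0" and "watrous_coeff d \<epsilon> * real d < -1"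
proof -
  have "0 < real d"
    using assms(1) by simp
  then have eq: "watrous_coeff d \<epsilon> = \<epsilon> - 1 / real d"
    by (simp add: watrous_coeff_def field_simps)
  show "-1 < watrous_coeff d \<epsilon>" and "watrous_coeff d \<epsilon> < 0"
    using eq assms(2,3) \<open>0 < real d\<close> by (simp_all add: less_trans[of \<epsilon> 0])
  have "watrous_coeff d \<epsilon> * real d = \<epsilon> * real d - 1"
    using \<open>0 < real d\<close> by (simp add: watrous_coeff_def)
  then show "watrous_coeff d \<epsilon> * real d < -1"
    using assms(3) \<open>0 < real d\<close> by (simp add: mult_neg_pos)
qed

lemma watrous_eigenvalues_ordered:
  fixes c :: real
  assumes "2 \<le> d" and "-1 < c" and "c * real d < -1"
  shows "0 < real d * (real d + 1) * (1 + c)"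
    and "real d * (real d + 1) * (1 + c) < real d * (real d - 1) * (1 - c)"
proof -
  show "0 < real d * (real d + 1) * (1 + c)"
    using assms by simp
  have "real d * (real d - 1) * (1 - c) - real d * (real d + 1) * (1 + c) = (-2 * real d) * (1 + c * real d)"
    by (simp add: algebra_simps)
  also have "\<dots> > 0"
    using assms by (intro mult_neg_neg) auto
  finally show "real d * (real d + 1) * (1 + c) < real d * (real d - 1) * (1 - c)"
    by simp
qed

lemma watrous_trace_pos:
  fixes c :: real
  assumes "2 \<le> d" and "-1 < c"
  shows "0 < real d ^ 4 + 2 * c * real d ^ 3 + real d ^ 2"
proof -
  have "real d ^ 4 + 2 * c * real d ^ 3 + real d ^ 2 = real d ^ 2 * ((real d - 1) ^ 2 + 2 * real d * (1 + c))"
    by (simp add: algebra_simps power2_eq_square eval_nat_numeral)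
  also have "\<dots> > 0"
    using assms by (simp add: add_nonneg_pos)
  finally show ?thesis .
qed

lemma exists_pow_less:
  fixes a b x y :: real
  assumes "0 < x" and "x < y" and "0 < b"
  shows "\<exists>n. a * x ^ n < b * y ^ n"
proof -
  obtain n where "a / b < (y / x) ^ n"
    using real_arch_pow[of "y / x" "a / b"] assms by auto
  then have "a * x ^ n < b * y ^ n"
    using assms by (simp add: power_divide field_simps)
  then show ?thesis ..
qed

lemma distillableI:
  assumes "1 \<le> n" and "schmidt_rank_le 2 (tlabels SA n) (tlabels SB n) \<psi>"
    and "qform (tlabels SA n) (tlabels SB n) (ptrans_B (tpow n \<rho>)) \<psi> = complex_of_real r" and "r < 0"
  shows "distillable SA SB \<rho>"
  unfolding distillable_def Let_def using assms by (intro exI[of _ n] conjI exI[of _ \<psi>]) simp_all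

theorem mainTheorem2:
  fixes d :: nat and \<epsilon> :: real
  assumes "d \<ge> 2"
    and "1 / real d - 1 < \<epsilon>" and "\<epsilon> < 0"
  shows "distillable ({..<d} \<times> {..<d}) ({..<d} \<times> {..<d})
           (\<lambda>u v. watrous d \<epsilon> u v / op_trace ({..<d} \<times> {..<d}) ({..<d} \<times> {..<d}) (watrous d \<epsilon>))"
proof -
  let ?S = "{..<d} \<times> {..<d}"
  define c where "c = watrous_coeff d \<epsilon>"
  define X where "X = real d * (real d + 1) * (1 + c)"
  define Y where "Y = real d * (real d - 1) * (1 - c)"
  define t where "t = real d ^ 4 + 2 * c * real d ^ 3 + real d ^ 2"
  have c: "-1 < c" "c < 0" "c * real d < -1"
    unfolding c_def using watrous_coeff_bounds[OF assms] by simp_all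
  have "0 < X" "X < Y" "0 < t"
    unfolding X_def Y_def t_def using watrous_eigenvalues_ordered watrous_trace_pos assms(1) c by simp_all
  moreover have "0 < 1 - c"
    using c by simp
  ultimately obtain n where n: "3 * (1 + c) * X ^ n < (1 - c) * Y ^ n"
    using exists_pow_less by blast
  have expectation: "qform (tlabels ?S (Suc n)) (tlabels ?S (Suc n))
      (ptrans_B (tpow (Suc n) (\<lambda>u v. watrous d \<epsilon> u v / op_trace ?S ?S (watrous d \<epsilon>))))
      (\<lambda>(xs, ys). chain_state 0 1 xs ys)
    = complex_of_real ((3 * (1 + c) * X ^ n - (1 - c) * Y ^ n) / t ^ Suc n)"
    unfolding c_def X_def Y_def t_def by (rule qform_watrous_chain_state[OF assms(1)])
  have "(3 * (1 + c) * X ^ n - (1 - c) * Y ^ n) / t ^ Suc n < 0"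
    using n \<open>0 < t\<close> by (simp add: divide_neg_pos)
  then show ?thesis
    using distillableI[OF _ schmidt_rank_chain_state expectation] by simp
qed

end
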